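(* Let $\Sigma$ be an oriented graph on $n$ vertices with skew adjacency matrix $S$ and walk-matrix $W=W(\Sigma)$ satisfying $\det W\neq 0$, let $P$ be a permutation matrix with $P^{\mathrm T}SP=S^{\mathrm T}$, let $p$ be an odd prime, and for $\lambda\in\{1,-1\}$ let $V_\lambda\subset\mathbb{F}_p^n$ denote the eigenspace of $P$ (viewed over $\mathbb{F}_p$) for the eigenvalue $\lambda$. If $n$ is even then $\dim V_1=\dim V_{-1}=n/2$; if $n$ is odd then $\dim V_1=(n+1)/2$ and $\dim V_{-1}=(n-1)/2$.
   Context: The skew adjacency matrix $S=(S_{ij})$ of an oriented graph on vertices $v_1,\dots,v_n$ has $S_{ij}=1$ if $(v_i,v_j)$ is a directed edge, $S_{ij}=-1$ if $(v_j,v_i)$ is a directed edge, and $S_{ij}=0$ otherwise. The walk-matrix is $W(\Sigma)=[e,Se,\ldots,S^{n-1}e]$ with $e$ the all-ones vector. *)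

theory Defs
  imports "Jordan_Normal_Form.Jordan_Normal_Form_Uniqueness" "Berlekamp_Zassenhaus.Finite_Field"
begin

definition oriented_graph :: "nat \<Rightarrow> (nat \<Rightarrow> nat \<Rightarrow> bool) \<Rightarrow> bool" where
  "oriented_graph n E \<longleftrightarrow>
     (\<forall>i j. E i j \<longrightarrow> i < n \<and> j < n) \<and>
     (\<forall>i. \<not> E i i) \<and>
     (\<forall>i j. E i j \<longrightarrow> \<not> E j i)"

definition skew_adj :: "nat \<Rightarrow> (nat \<Rightarrow> nat \<Rightarrow> bool) \<Rightarrow> int mat" where
  "skew_adj n E = mat n n (\<lambda>(i, j). if E i j then 1 else if E j i then -1 else 0)"

definition walk_matrix :: "nat \<Rightarrow> int mat \<Rightarrow> int mat" where
  "walk_matrix n S = mat n n (\<lambda>(i, j). ((S ^\<^sub>m j) *\<^sub>v (vec n (\<lambda>_. 1))) $ i)"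

definition permutation_matrix :: "nat \<Rightarrow> int mat \<Rightarrow> bool" where
  "permutation_matrix n P \<longleftrightarrow>
     (\<exists>\<sigma>. \<sigma> permutes {..<n} \<and> P = mat n n (\<lambda>(i, j). if i = \<sigma> j then 1 else 0))"

end

theory Submission
  imports Defs
begin

text \<open>Since \<open>P\<close> is orthogonal and \<open>P\<^sup>T S P = S\<^sup>T = -S\<close>, the matrices anticommute, \<open>S P = -P S\<close>,
  so \<open>S\<^sup>k P = (-1)\<^sup>k P S\<^sup>k\<close>; together with \<open>P e = e\<close> this gives \<open>P W = W D\<close> for
  \<open>D = diag(1, -1, 1, \<dots>)\<close>. As \<open>W\<close> is nonsingular, \<open>P\<close> is similar to \<open>D\<close> over the rationals, so
  \<open>P\<^sup>2 = 1\<close> and \<open>tr P = tr D = n mod 2\<close>: the permutation is an involution with \<open>n mod 2\<close> fixed points and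
  \<open>n div 2\<close> transpositions. Over \<open>\<bbbF>\<^sub>p\<close> with \<open>p\<close> odd, \<open>P\<close> is diagonalised by the vectors
  \<open>e\<^sub>i \<plusminus> e\<^sub>\<sigma>\<^sub>i\<close>, each transposition contributing one eigenvector for \<open>1\<close> and one for \<open>-1\<close>.\<close>

definition diagonal_mat :: "nat \<Rightarrow> (nat \<Rightarrow> 'a::zero) \<Rightarrow> 'a mat" where
  "diagonal_mat n f = mat n n (\<lambda>(i, j). if i = j then f i else 0)"

lemma diagonal_mat_carrier [simp]:
  "diagonal_mat n f \<in> carrier_mat n n" "dim_row (diagonal_mat n f) = n" "dim_col (diagonal_mat n f) = n"
  by (auto simp: diagonal_mat_def)

lemma mult_diagonal_mat_index:
  fixes A :: "'a::semiring_0 mat"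
  assumes "A \<in> carrier_mat m n" and "i < m" and "j < n"
  shows "(A * diagonal_mat n f) $$ (i, j) = A $$ (i, j) * f j"
proof -
  have "(A * diagonal_mat n f) $$ (i, j) = (\<Sum>k\<in>{0..<n}. A $$ (i, k) * (if k = j then f k else 0))"
    using assms by (simp add: diagonal_mat_def scalar_prod_def)
  also have "\<dots> = (\<Sum>k\<in>{0..<n}. if k = j then A $$ (i, j) * f j else 0)"
    by (rule sum.cong) auto
  also have "\<dots> = A $$ (i, j) * f j"
    using \<open>j < n\<close> by simp
  finally show ?thesis .
qed

lemma diagonal_mat_mult:
  "diagonal_mat n f * diagonal_mat n g = diagonal_mat n (\<lambda>i. f i * (g i :: 'a::semiring_0))"
proof (rule eq_matI)
  fix i j
  assume "i < dim_row (diagonal_mat n (\<lambda>i. f i * g i))" and "j < dim_col (diagonal_mat n (\<lambda>i. f i * g i))"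
  then have "(diagonal_mat n f * diagonal_mat n g) $$ (i, j) = diagonal_mat n f $$ (i, j) * g j"
    by (intro mult_diagonal_mat_index) auto
  then show "(diagonal_mat n f * diagonal_mat n g) $$ (i, j) = diagonal_mat n (\<lambda>i. f i * g i) $$ (i, j)"
    using \<open>i < _\<close> \<open>j < _\<close> by (simp add: diagonal_mat_def)
qed auto

lemma diagonal_mat_one: "diagonal_mat n (\<lambda>_. 1) = 1\<^sub>m n"
  by (rule eq_matI) (auto simp: diagonal_mat_def)

lemma jordan_matrix_unit_blocks:
  "jordan_matrix (map (\<lambda>a. (1, a)) as) = diagonal_mat (length as) (\<lambda>i. as ! i)"
proof (induction as)
  case Nil
  show ?case by (rule eq_matI) (auto simp: jordan_matrix_def diagonal_mat_def)
next
  case (Cons a as)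
  have "sum_list (map fst (map (\<lambda>a. (1::nat, a)) as)) = length as"
    by (induction as) auto
  then show ?case
    unfolding list.map jordan_matrix_Cons Cons.IH
    by (intro eq_matI) (auto simp: diagonal_mat_def nth_Cons')
qed

lemma dim_gen_eigenspace_diagonal_mat:
  assumes "0 < k"
  shows "dim_gen_eigenspace (diagonal_mat n f :: 'a::field mat) ev k = card {i. i < n \<and> f i = ev}"
proof -
  have "diagonal_mat n f = jordan_matrix (map (\<lambda>a. (1, a)) (map f [0..<n]))"
    unfolding jordan_matrix_unit_blocks by (intro eq_matI) (auto simp: diagonal_mat_def)
  moreover have "(\<Sum>m \<leftarrow> map fst [(m, e) \<leftarrow> map (\<lambda>a. (1, a)) (map f xs). e = ev]. min k m)
      = length (filter (\<lambda>i. f i = ev) xs)" for xs :: "nat list"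
    using assms by (induction xs) auto
  ultimately show ?thesis
    by (simp add: dim_gen_eigenspace_jordan_matrix length_filter_conv_card del: map_map cong: conj_cong)
qed

definition trace_mat :: "'a::comm_monoid_add mat \<Rightarrow> 'a" where
  "trace_mat A = (\<Sum>i<dim_row A. A $$ (i, i))"

lemma trace_mat_mult_comm:
  fixes A B :: "'a::comm_semiring_0 mat"
  assumes "A \<in> carrier_mat n m" and "B \<in> carrier_mat m n"
  shows "trace_mat (A * B) = trace_mat (B * A)"
proof -
  have "trace_mat (A * B) = (\<Sum>i<n. \<Sum>k<m. A $$ (i, k) * B $$ (k, i))"
    using assms by (simp add: trace_mat_def scalar_prod_def atLeast0LessThan)
  also have "\<dots> = (\<Sum>k<m. \<Sum>i<n. B $$ (k, i) * A $$ (i, k))"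
    by (subst sum.swap) (simp add: mult.commute)
  also have "\<dots> = trace_mat (B * A)"
    using assms by (simp add: trace_mat_def scalar_prod_def atLeast0LessThan)
  finally show ?thesis .
qed

lemma trace_mat_smult:
  assumes "A \<in> carrier_mat n n"
  shows "trace_mat (c \<cdot>\<^sub>m A) = c * trace_mat (A :: 'a::semiring_0 mat)"
  using assms by (simp add: trace_mat_def sum_distrib_left)

lemma trace_diagonal_mat: "trace_mat (diagonal_mat n f) = (\<Sum>i<n. f i)"
  by (simp add: trace_mat_def diagonal_mat_def)

lemma mult_right_cancel_det:
  fixes A B W :: "'a::idom mat"
  assumes A: "A \<in> carrier_mat m n" and B: "B \<in> carrier_mat m n" and W: "W \<in> carrier_mat n n"
    and det: "det W \<noteq> 0" and eq: "A * W = B * W"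
  shows "A = B"
proof -
  have scaled: "det W \<cdot>\<^sub>m C = C * W * adj_mat W" if C: "C \<in> carrier_mat m n" for C
  proof -
    have "C * W * adj_mat W = C * (det W \<cdot>\<^sub>m 1\<^sub>m n)"
      using C W adj_mat[OF W] by (simp add: assoc_mult_mat[of C m n W n _ n])
    also have "\<dots> = det W \<cdot>\<^sub>m C"
      using C by (simp add: mult_smult_distrib[of C m n "1\<^sub>m n" n])
    finally show ?thesis by simp
  qed
  have "det W \<cdot>\<^sub>m A = det W \<cdot>\<^sub>m B"
    using scaled[OF A] scaled[OF B] eq by simp
  then have "det W * A $$ (i, j) = det W * B $$ (i, j)" if "i < m" "j < n" for i j
    using A B that by (metis index_smult_mat(1) carrier_matD)
  then show ?thesis
    using A B det by (intro eq_matI) auto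
qed

lemma intertwined_trace_eq:
  fixes A W D :: "'a::idom mat"
  assumes A: "A \<in> carrier_mat n n" and W: "W \<in> carrier_mat n n" and D: "D \<in> carrier_mat n n"
    and det: "det W \<noteq> 0" and AW: "A * W = W * D"
  shows "trace_mat A = trace_mat D"
proof -
  define M where "M = adj_mat W"
  have M: "M \<in> carrier_mat n n" and WM: "W * M = det W \<cdot>\<^sub>m 1\<^sub>m n" and MW: "M * W = det W \<cdot>\<^sub>m 1\<^sub>m n"
    using adj_mat[OF W] unfolding M_def by auto
  have "det W * trace_mat A = trace_mat (A * (W * M))"
    using A by (simp add: WM mult_smult_distrib[of A n n "1\<^sub>m n" n] trace_mat_smult)
  also have "A * (W * M) = A * W * M"
    using A W M by (simp add: assoc_mult_mat[of A n n W n M n])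
  also have "\<dots> = W * (D * M)"
    using W D M by (simp add: AW assoc_mult_mat[of W n n D n M n])
  also have "trace_mat \<dots> = trace_mat (D * (M * W))"
    using W D M by (simp add: trace_mat_mult_comm[of W n n] assoc_mult_mat[of D n n M n W n])
  also have "\<dots> = det W * trace_mat D"
    using D by (simp add: MW mult_smult_distrib[of D n n "1\<^sub>m n" n] trace_mat_smult[of D n])
  finally show ?thesis
    using det by simp
qed

lemma intertwined_involution:
  fixes A W D :: "'a::idom mat"
  assumes A: "A \<in> carrier_mat n n" and W: "W \<in> carrier_mat n n" and D: "D \<in> carrier_mat n n"
    and det: "det W \<noteq> 0" and AW: "A * W = W * D" and DD: "D * D = 1\<^sub>m n"
  shows "A * A = 1\<^sub>m n"
proof (rule mult_right_cancel_det[OF _ _ W det])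
  have "A * A * W = A * (W * D)"
    using A W by (simp add: assoc_mult_mat[of A n n A n W n] AW)
  also have "\<dots> = W * (D * D)"
    using A W D by (simp add: AW assoc_mult_mat[of A n n W n D n, symmetric] assoc_mult_mat[of W n n D n D n])
  finally have "A * A * W = W * (D * D)" .
  then show "A * A * W = 1\<^sub>m n * W"
    using W DD by simp
qed (use A in auto)

definition perm_mat :: "nat \<Rightarrow> (nat \<Rightarrow> nat) \<Rightarrow> 'a::{zero,one} mat" where
  "perm_mat n \<sigma> = mat n n (\<lambda>(i, j). if i = \<sigma> j then 1 else 0)"

lemma perm_mat_carrier [simp]:
  "perm_mat n \<sigma> \<in> carrier_mat n n" "dim_row (perm_mat n \<sigma>) = n" "dim_col (perm_mat n \<sigma>) = n"
  by (auto simp: perm_mat_def)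

lemma of_int_perm_mat: "map_mat of_int (perm_mat n \<sigma>) = (perm_mat n \<sigma> :: 'a::ring_1 mat)"
  by (rule eq_matI) (auto simp: perm_mat_def)

lemma perm_mat_row_sum:
  fixes f :: "nat \<Rightarrow> 'a::semiring_1"
  assumes \<sigma>: "\<sigma> permutes {..<n}" and "i < n"
  shows "(\<Sum>k\<in>{0..<n}. (if i = \<sigma> k then 1 else 0) * f k) = f (Hilbert_Choice.inv \<sigma> i)"
proof -
  have "(\<Sum>k\<in>{0..<n}. (if i = \<sigma> k then 1 else 0) * f k)
      = (\<Sum>k\<in>{0..<n}. if Hilbert_Choice.inv \<sigma> i = k then f k else 0)"
    by (rule sum.cong) (auto simp: permutes_inv_eq[OF \<sigma>])
  also have "\<dots> = f (Hilbert_Choice.inv \<sigma> i)"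
    using permutes_in_image[OF permutes_inv[OF \<sigma>]] \<open>i < n\<close> by simp
  finally show ?thesis .
qed

lemma perm_mat_mult_index:
  fixes A :: "'a::semiring_1 mat"
  assumes \<sigma>: "\<sigma> permutes {..<n}" and A: "A \<in> carrier_mat n m" and "i < n" and "j < m"
  shows "(perm_mat n \<sigma> * A) $$ (i, j) = A $$ (Hilbert_Choice.inv \<sigma> i, j)"
  using assms perm_mat_row_sum[OF \<sigma> \<open>i < n\<close>, of "\<lambda>k. A $$ (k, j)"]
  by (simp add: perm_mat_def scalar_prod_def)

lemma perm_mat_mult_perm_mat:
  assumes \<sigma>: "\<sigma> permutes {..<n}" and \<tau>: "\<tau> permutes {..<n}"
  shows "perm_mat n \<sigma> * perm_mat n \<tau> = (perm_mat n (\<sigma> \<circ> \<tau>) :: 'a::semiring_1 mat)"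
proof (rule eq_matI)
  fix i j
  assume "i < dim_row (perm_mat n (\<sigma> \<circ> \<tau>) :: 'a mat)" and "j < dim_col (perm_mat n (\<sigma> \<circ> \<tau>) :: 'a mat)"
  then have "i < n" and "j < n"
    by auto
  then have "(perm_mat n \<sigma> * perm_mat n \<tau> :: 'a mat) $$ (i, j) = perm_mat n \<tau> $$ (Hilbert_Choice.inv \<sigma> i, j)"
    by (intro perm_mat_mult_index[OF \<sigma>]) auto
  moreover have "Hilbert_Choice.inv \<sigma> i < n"
    using permutes_in_image[OF permutes_inv[OF \<sigma>]] \<open>i < n\<close> by simp
  moreover have "Hilbert_Choice.inv \<sigma> i = \<tau> j \<longleftrightarrow> i = \<sigma> (\<tau> j)"
    using permutes_inv_eq[OF \<sigma>, of i "\<tau> j"] by auto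
  ultimately show "(perm_mat n \<sigma> * perm_mat n \<tau> :: 'a mat) $$ (i, j) = perm_mat n (\<sigma> \<circ> \<tau>) $$ (i, j)"
    using \<open>i < n\<close> \<open>j < n\<close> by (simp add: perm_mat_def)
qed auto

lemma perm_mat_id: "perm_mat n id = 1\<^sub>m n"
  by (rule eq_matI) (auto simp: perm_mat_def)

lemma transpose_perm_mat:
  assumes "\<sigma> permutes {..<n}"
  shows "transpose_mat (perm_mat n \<sigma>) = perm_mat n (Hilbert_Choice.inv \<sigma>)"
  by (rule eq_matI) (auto simp: perm_mat_def permutes_inv_eq[OF assms] permutes_inverses[OF assms])

lemma perm_mat_mult_transpose:
  assumes "\<sigma> permutes {..<n}"
  shows "perm_mat n \<sigma> * transpose_mat (perm_mat n \<sigma>) = (1\<^sub>m n :: 'a::semiring_1 mat)"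
  using assms
  by (simp add: transpose_perm_mat perm_mat_mult_perm_mat permutes_inv permutes_inv_o perm_mat_id)

lemma perm_mat_mult_ones:
  assumes "\<sigma> permutes {..<n}"
  shows "perm_mat n \<sigma> *\<^sub>v vec n (\<lambda>_. 1) = (vec n (\<lambda>_. 1) :: 'a::semiring_1 vec)"
  using perm_mat_row_sum[OF assms, of _ "\<lambda>_. 1"]
  by (intro eq_vecI) (simp_all add: perm_mat_def scalar_prod_def)

lemma trace_perm_mat:
  "trace_mat (perm_mat n \<sigma> :: 'a::semiring_1 mat) = of_nat (card {i. i < n \<and> \<sigma> i = i})"
proof -
  have "trace_mat (perm_mat n \<sigma> :: 'a mat) = (\<Sum>i\<in>{..<n}. if \<sigma> i = i then 1 else 0)"
    by (auto simp: trace_mat_def perm_mat_def intro!: sum.cong)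
  also have "\<dots> = (\<Sum>i\<in>{i\<in>{..<n}. \<sigma> i = i}. 1)"
    by (rule sum.inter_filter[symmetric]) simp
  also have "{i\<in>{..<n}. \<sigma> i = i} = {i. i < n \<and> \<sigma> i = i}"
    by auto
  finally show ?thesis
    by simp
qed

lemma perm_mat_square_one_imp_involution:
  assumes "\<sigma> permutes {..<n}" and "perm_mat n \<sigma> * perm_mat n \<sigma> = (1\<^sub>m n :: 'a::{semiring_1,zero_neq_one} mat)"
    and "i < n"
  shows "\<sigma> (\<sigma> i) = i"
proof -
  have "(perm_mat n (\<sigma> \<circ> \<sigma>) :: 'a mat) $$ (i, i) = 1"
    using assms by (simp add: perm_mat_mult_perm_mat)
  then show ?thesis
    using \<open>i < n\<close> by (simp add: perm_mat_def split: if_splits)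
qed

lemma skew_adj_carrier [simp]: "skew_adj n E \<in> carrier_mat n n"
  by (simp add: skew_adj_def)

lemma walk_matrix_carrier [simp]: "walk_matrix n S \<in> carrier_mat n n"
  by (simp add: walk_matrix_def)

lemma transpose_skew_adj:
  assumes "oriented_graph n E"
  shows "transpose_mat (skew_adj n E) = (-1) \<cdot>\<^sub>m skew_adj n E"
  using assms unfolding oriented_graph_def skew_adj_def by (intro eq_matI) auto

lemma smult_smult_mat: "a \<cdot>\<^sub>m (b \<cdot>\<^sub>m A) = (a * b :: 'a::semigroup_mult) \<cdot>\<^sub>m A"
  by (rule eq_matI) (simp_all add: mult.assoc)

lemma smult_mult_mat_vec:
  assumes "dim_vec v = dim_col A"
  shows "(c \<cdot>\<^sub>m A) *\<^sub>v v = (c :: 'a::comm_semiring_0) \<cdot>\<^sub>v (A *\<^sub>v v)"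
  using assms by (intro eq_vecI) (simp_all add: scalar_prod_def sum_distrib_left mult.assoc)

lemma orthogonal_conj_imp_twisted_comm:
  fixes S P :: "'a::comm_ring_1 mat"
  assumes S: "S \<in> carrier_mat n n" and P: "P \<in> carrier_mat n n"
    and orth: "P * transpose_mat P = 1\<^sub>m n" and conj: "transpose_mat P * S * P = c \<cdot>\<^sub>m S"
  shows "S * P = c \<cdot>\<^sub>m (P * S)"
proof -
  have "S * P = P * transpose_mat P * S * P"
    using S P by (simp add: orth)
  also have "\<dots> = P * (transpose_mat P * S * P)"
    using S P by (simp add: assoc_mult_mat[of _ n n _ n _ n])
  also have "\<dots> = c \<cdot>\<^sub>m (P * S)"
    using S P by (simp add: conj mult_smult_distrib[of P n n S n])
  finally show ?thesis .
qed

lemma pow_mat_twisted_comm: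
  fixes S P :: "'a::comm_ring_1 mat"
  assumes S: "S \<in> carrier_mat n n" and P: "P \<in> carrier_mat n n"
    and comm: "S * P = c \<cdot>\<^sub>m (P * S)"
  shows "S ^\<^sub>m k * P = c ^ k \<cdot>\<^sub>m (P * S ^\<^sub>m k)"
proof (induction k)
  case 0
  show ?case
    using S P by (intro eq_matI) auto
next
  case (Suc k)
  have "S ^\<^sub>m Suc k * P = S ^\<^sub>m k * (S * P)"
    using S P by (simp add: assoc_mult_mat[of _ n n S n P n])
  also have "\<dots> = c \<cdot>\<^sub>m (S ^\<^sub>m k * P * S)"
    using S P by (simp add: comm mult_smult_distrib[of _ n n _ n] assoc_mult_mat[of _ n n P n S n])
  also have "\<dots> = c \<cdot>\<^sub>m (c ^ k \<cdot>\<^sub>m (P * S ^\<^sub>m k * S))"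
    using S P by (simp add: Suc.IH mult_smult_assoc_mat[of _ n n S n])
  also have "\<dots> = c ^ Suc k \<cdot>\<^sub>m (P * S ^\<^sub>m Suc k)"
    using S P by (simp add: smult_smult_mat assoc_mult_mat[of P n n _ n S n])
  finally show ?case .
qed

definition alternating_signs :: "nat \<Rightarrow> 'a::ring_1 mat" where
  "alternating_signs n = diagonal_mat n (\<lambda>j. (-1) ^ j)"

lemma alternating_signs_square: "alternating_signs n * alternating_signs n = (1\<^sub>m n :: 'a::ring_1 mat)"
  by (simp add: alternating_signs_def diagonal_mat_mult diagonal_mat_one flip: power_add)

lemma sum_alternating_signs: "(\<Sum>j<n. (-1 :: int) ^ j) = int (n mod 2)"
proof (induction n)
  case (Suc n)
  then have "(\<Sum>j<Suc n. (-1 :: int) ^ j) = int (n mod 2) + (-1) ^ n"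
    by simp
  then show ?case
    by (cases "even n") (auto simp: even_iff_mod_2_eq_zero odd_iff_mod_2_eq_one mod_Suc)
qed simp

lemma trace_alternating_signs: "trace_mat (alternating_signs n :: int mat) = int (n mod 2)"
  by (simp add: alternating_signs_def trace_diagonal_mat sum_alternating_signs)

lemma walk_matrix_twisted_comm:
  fixes S P :: "int mat"
  assumes S: "S \<in> carrier_mat n n" and P: "P \<in> carrier_mat n n"
    and comm: "S * P = (-1) \<cdot>\<^sub>m (P * S)" and Pe: "P *\<^sub>v vec n (\<lambda>_. 1) = vec n (\<lambda>_. 1)"
  shows "P * walk_matrix n S = walk_matrix n S * alternating_signs n"
proof (rule eq_matI)
  fix i j
  assume "i < dim_row (walk_matrix n S * alternating_signs n)"
    and "j < dim_col (walk_matrix n S * alternating_signs n)"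
  then have i: "i < n" and j: "j < n"
    by (auto simp: alternating_signs_def walk_matrix_def)
  define e where "e = vec n (\<lambda>_. 1 :: int)"
  define w where "w = S ^\<^sub>m j *\<^sub>v e"
  have Sj: "S ^\<^sub>m j \<in> carrier_mat n n"
    using S by simp
  have "w = (S ^\<^sub>m j * P) *\<^sub>v e"
    using assoc_mult_mat_vec[OF Sj P, of e] by (simp add: w_def e_def Pe)
  also have "\<dots> = ((-1) ^ j \<cdot>\<^sub>m (P * S ^\<^sub>m j)) *\<^sub>v e"
    by (simp add: pow_mat_twisted_comm[OF S P comm])
  also have "\<dots> = (-1) ^ j \<cdot>\<^sub>v ((P * S ^\<^sub>m j) *\<^sub>v e)"
    using P S by (intro smult_mult_mat_vec) (simp add: e_def)
  also have "\<dots> = (-1) ^ j \<cdot>\<^sub>v (P *\<^sub>v w)"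
    using assoc_mult_mat_vec[OF P Sj, of e] by (simp add: w_def e_def)
  finally have "(-1) ^ j \<cdot>\<^sub>v w = (-1) ^ j \<cdot>\<^sub>v ((-1) ^ j \<cdot>\<^sub>v (P *\<^sub>v w))"
    by simp
  then have Pw: "P *\<^sub>v w = (-1) ^ j \<cdot>\<^sub>v w"
    by (simp add: smult_smult_assoc flip: power_add)
  have "(P * walk_matrix n S) $$ (i, j) = (P *\<^sub>v w) $ i"
    using i j P S by (simp add: walk_matrix_def w_def e_def scalar_prod_def)
  also have "\<dots> = walk_matrix n S $$ (i, j) * (-1) ^ j"
    unfolding Pw using i j S by (simp add: walk_matrix_def w_def e_def)
  also have "\<dots> = (walk_matrix n S * alternating_signs n) $$ (i, j)"
    using i j by (simp add: alternating_signs_def mult_diagonal_mat_index[of _ n n])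
  finally show "(P * walk_matrix n S) $$ (i, j) = (walk_matrix n S * alternating_signs n) $$ (i, j)" .
qed (use P in \<open>auto simp: alternating_signs_def walk_matrix_def\<close>)

lemma walk_nonsingular_perm_involution:
  assumes graph: "oriented_graph n E" and det: "det (walk_matrix n (skew_adj n E)) \<noteq> 0"
    and \<sigma>: "\<sigma> permutes {..<n}"
    and conj: "transpose_mat (perm_mat n \<sigma>) * skew_adj n E * perm_mat n \<sigma> = transpose_mat (skew_adj n E)"
  shows "perm_mat n \<sigma> * perm_mat n \<sigma> = (1\<^sub>m n :: int mat)"
    and "card {i. i < n \<and> \<sigma> i = i} = n mod 2"
proof -
  define S where "S = skew_adj n E"
  define P :: "int mat" where "P = perm_mat n \<sigma>"
  have S: "S \<in> carrier_mat n n" and P: "P \<in> carrier_mat n n"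
    by (simp_all add: S_def P_def)
  have "S * P = (-1) \<cdot>\<^sub>m (P * S)"
    using S P conj transpose_skew_adj[OF graph] perm_mat_mult_transpose[OF \<sigma>]
    by (intro orthogonal_conj_imp_twisted_comm) (simp_all add: S_def P_def)
  then have PW: "P * walk_matrix n S = walk_matrix n S * alternating_signs n"
    using S P perm_mat_mult_ones[OF \<sigma>] by (intro walk_matrix_twisted_comm) (simp_all add: P_def)
  have D: "alternating_signs n \<in> carrier_mat n n"
    by (simp add: alternating_signs_def)
  show "perm_mat n \<sigma> * perm_mat n \<sigma> = (1\<^sub>m n :: int mat)"
    using intertwined_involution[OF P _ D _ PW alternating_signs_square] det
    by (simp add: P_def S_def)
  have "trace_mat P = trace_mat (alternating_signs n :: int mat)"
    using intertwined_trace_eq[OF P _ D _ PW] det by (simp add: S_def)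
  then show "card {i. i < n \<and> \<sigma> i = i} = n mod 2"
    by (simp add: P_def trace_perm_mat trace_alternating_signs)
qed

locale perm_involution =
  fixes n :: nat and \<sigma> :: "nat \<Rightarrow> nat"
  assumes permutes: "\<sigma> permutes {..<n}" and involutive: "\<And>i. i < n \<Longrightarrow> \<sigma> (\<sigma> i) = i"
begin

lemma image_less: "i < n \<Longrightarrow> \<sigma> i < n"
  using permutes_in_image[OF permutes] by simp

lemma inv_eq_self: "Hilbert_Choice.inv \<sigma> i = \<sigma> i"
proof (cases "i < n")
  case False
  then have "\<sigma> i = i"
    using permutes_not_in[OF permutes] by simp
  then show ?thesis
    using permutes_inv_eq[OF permutes] by metis
qed (use permutes_inv_eq[OF permutes] involutive in metis)

lemma card_decomposition: "n = card {i. i < n \<and> \<sigma> i = i} + 2 * card {i. i < n \<and> \<sigma> i < i}"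
proof -
  define A where "A = {i. i < n \<and> \<sigma> i < i}"
  define B where "B = {i. i < n \<and> i < \<sigma> i}"
  define C where "C = {i. i < n \<and> \<sigma> i = i}"
  have "\<sigma> ` A = B"
  proof
    show "\<sigma> ` A \<subseteq> B"
      unfolding A_def B_def using involutive image_less by auto
    show "B \<subseteq> \<sigma> ` A"
    proof
      fix j
      assume "j \<in> B"
      then have "\<sigma> j \<in> A" and "j = \<sigma> (\<sigma> j)"
        unfolding A_def B_def using involutive image_less by auto
      then show "j \<in> \<sigma> ` A"
        by blast
    qed
  qed
  moreover have "inj_on \<sigma> A"
    using permutes_inj[OF permutes] by (auto intro: inj_on_subset)
  ultimately have "card B = card A"
    using card_image by blast
  have "{..<n} = (A \<union> B) \<union> C"
    unfolding A_def B_def C_def by auto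
  then have "n = card ((A \<union> B) \<union> C)"
    by (metis card_lessThan)
  also have "\<dots> = card (A \<union> B) + card C"
    by (rule card_Un_disjoint) (auto simp: A_def B_def C_def)
  also have "card (A \<union> B) = card A + card B"
    by (rule card_Un_disjoint) (auto simp: A_def B_def)
  finally show ?thesis
    using \<open>card B = card A\<close> unfolding A_def C_def by simp
qed

definition eigensign :: "nat \<Rightarrow> 'a::ring_1" where
  "eigensign i = (if \<sigma> i < i then -1 else 1)"

text \<open>For a 2-cycle \<open>i < \<sigma> i\<close> the columns \<open>i\<close> and \<open>\<sigma> i\<close> are \<open>e\<^sub>i + e\<^sub>\<sigma>\<^sub>i\<close> and
  \<open>e\<^sub>i - e\<^sub>\<sigma>\<^sub>i\<close>, eigenvectors for \<open>1\<close> and \<open>-1\<close>; a fixed point \<open>i\<close> contributes \<open>e\<^sub>i\<close>.\<close>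
definition eigenbasis :: "'a::ring_1 mat" where
  "eigenbasis = mat n n (\<lambda>(r, i). if r = i then eigensign i else if r = \<sigma> i then 1 else 0)"

lemma eigenbasis_carrier [simp]:
  "eigenbasis \<in> carrier_mat n n" "dim_row eigenbasis = n" "dim_col eigenbasis = n"
  by (simp_all add: eigenbasis_def)

lemma perm_mat_mult_eigenbasis:
  "perm_mat n \<sigma> * eigenbasis = eigenbasis * (diagonal_mat n eigensign :: 'a::ring_1 mat)"
proof (rule eq_matI)
  fix r i
  assume "r < dim_row (eigenbasis * diagonal_mat n eigensign :: 'a mat)"
    and "i < dim_col (eigenbasis * diagonal_mat n eigensign :: 'a mat)"
  then have r: "r < n" and i: "i < n"
    by auto
  have "(perm_mat n \<sigma> * eigenbasis :: 'a mat) $$ (r, i) = eigenbasis $$ (\<sigma> r, i)"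
    using perm_mat_mult_index[OF permutes eigenbasis_carrier(1) r i] by (simp add: inv_eq_self)
  also have "\<dots> = eigenbasis $$ (r, i) * (eigensign i :: 'a)"
    using r i image_less involutive[OF r] involutive[OF i]
    by (auto simp: eigenbasis_def eigensign_def)
  also have "\<dots> = (eigenbasis * diagonal_mat n eigensign) $$ (r, i)"
    by (rule mult_diagonal_mat_index[symmetric]) (use r i in auto)
  finally show "(perm_mat n \<sigma> * eigenbasis :: 'a mat) $$ (r, i) = (eigenbasis * diagonal_mat n eigensign) $$ (r, i)" .
qed auto

lemma eigenbasis_col_sum:
  fixes g :: "nat \<Rightarrow> 'a::ring_1"
  assumes i: "i < n"
  shows "(\<Sum>r\<in>{0..<n}. eigenbasis $$ (r, i) * g r) = (if \<sigma> i = i then g i else eigensign i * g i + g (\<sigma> i))"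
proof (cases "\<sigma> i = i")
  case True
  then have "(\<Sum>r\<in>{0..<n}. eigenbasis $$ (r, i) * g r) = (\<Sum>r\<in>{0..<n}. if r = i then g i else 0)"
    using i by (intro sum.cong) (auto simp: eigenbasis_def eigensign_def)
  then show ?thesis
    using True i by simp
next
  case False
  then have "(\<Sum>r\<in>{0..<n}. eigenbasis $$ (r, i) * g r)
      = (\<Sum>r\<in>{0..<n}. (if r = i then eigensign i * g i else 0) + (if r = \<sigma> i then g (\<sigma> i) else 0))"
    using i by (intro sum.cong) (auto simp: eigenbasis_def)
  then show ?thesis
    using False i image_less[OF i] by (simp add: sum.distrib)
qed

lemma eigenbasis_gram:
  "transpose_mat eigenbasis * eigenbasis = diagonal_mat n (\<lambda>i. if \<sigma> i = i then 1 else 2 :: 'a::ring_1)"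
proof (rule eq_matI)
  fix i j
  assume "i < dim_row (diagonal_mat n (\<lambda>i. if \<sigma> i = i then 1 else 2 :: 'a))"
    and "j < dim_col (diagonal_mat n (\<lambda>i. if \<sigma> i = i then 1 else 2 :: 'a))"
  then have i: "i < n" and j: "j < n"
    by auto
  have "(transpose_mat eigenbasis * eigenbasis :: 'a mat) $$ (i, j)
      = (\<Sum>r\<in>{0..<n}. eigenbasis $$ (r, i) * eigenbasis $$ (r, j))"
    using i j by (simp add: scalar_prod_def)
  also have "\<dots> = (if \<sigma> i = i then eigenbasis $$ (i, j) else eigensign i * eigenbasis $$ (i, j) + eigenbasis $$ (\<sigma> i, j))"
    by (rule eigenbasis_col_sum[OF i])
  also have "\<dots> = diagonal_mat n (\<lambda>i. if \<sigma> i = i then 1 else 2) $$ (i, j)"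
  proof -
    have entry: "eigenbasis $$ (r, k) = (if r = k then eigensign k else if r = \<sigma> k then 1 else 0 :: 'a)"
      if "r < n" and "k < n" for r k
      using that by (simp add: eigenbasis_def)
    have "\<sigma> i < n"
      using image_less[OF i] .
    consider "\<sigma> i = i" | "\<sigma> i \<noteq> i" "j = i" | "\<sigma> i \<noteq> i" "j = \<sigma> i" | "j \<noteq> i" "j \<noteq> \<sigma> i"
      by blast
    then show ?thesis
    proof cases
      case 1
      then have "i = \<sigma> j \<longleftrightarrow> i = j"
        using involutive[OF j] by metis
      then show ?thesis
        using 1 i j by (cases "i = j") (simp_all add: entry eigensign_def diagonal_mat_def)
    next
      case 2
      then show ?thesis
        using i \<open>\<sigma> i < n\<close> by (simp add: entry eigensign_def diagonal_mat_def)
    next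
      case 3
      then show ?thesis
        using i \<open>\<sigma> i < n\<close> involutive[OF i] by (auto simp: entry eigensign_def diagonal_mat_def)
    next
      case 4
      then have "i \<noteq> \<sigma> j" and "\<sigma> i \<noteq> \<sigma> j"
        using involutive[OF i] involutive[OF j] by metis+
      then show ?thesis
        using 4 i j \<open>\<sigma> i < n\<close> by (simp add: entry diagonal_mat_def)
    qed
  qed
  finally show "(transpose_mat eigenbasis * eigenbasis :: 'a mat) $$ (i, j)
      = diagonal_mat n (\<lambda>i. if \<sigma> i = i then 1 else 2) $$ (i, j)" .
qed auto

definition eigenbasis_inv :: "'a::field mat" where
  "eigenbasis_inv = diagonal_mat n (\<lambda>i. if \<sigma> i = i then 1 else inverse 2) * transpose_mat eigenbasis"

lemma eigenbasis_inv_mult_eigenbasis: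
  assumes "(2 :: 'a::field) \<noteq> 0"
  shows "eigenbasis_inv * eigenbasis = (1\<^sub>m n :: 'a mat)"
proof -
  have "eigenbasis_inv * eigenbasis
      = diagonal_mat n (\<lambda>i. if \<sigma> i = i then 1 else inverse 2) * (transpose_mat eigenbasis * (eigenbasis :: 'a mat))"
    unfolding eigenbasis_inv_def by (rule assoc_mult_mat[of _ n n _ n _ n]) auto
  also have "\<dots> = diagonal_mat n (\<lambda>_. 1)"
    using assms by (simp add: eigenbasis_gram diagonal_mat_mult if_distrib cong: if_cong)
  finally show ?thesis
    by (simp add: diagonal_mat_one)
qed

lemma eigenbasis_inv_carrier [simp]: "eigenbasis_inv \<in> carrier_mat n n"
  unfolding eigenbasis_inv_def by (rule mult_carrier_mat[where n = n]) simp_all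

lemma similar_perm_mat_diagonal:
  assumes "(2 :: 'a::field) \<noteq> 0"
  shows "similar_mat (perm_mat n \<sigma>) (diagonal_mat n eigensign :: 'a mat)"
proof -
  have left: "eigenbasis_inv * eigenbasis = (1\<^sub>m n :: 'a mat)"
    by (rule eigenbasis_inv_mult_eigenbasis[OF assms])
  then have right: "eigenbasis * eigenbasis_inv = (1\<^sub>m n :: 'a mat)"
    by (rule mat_mult_left_right_inverse[rotated 2]) simp_all
  have "(perm_mat n \<sigma> :: 'a mat) = perm_mat n \<sigma> * (eigenbasis * eigenbasis_inv)"
    by (simp add: right)
  also have "\<dots> = perm_mat n \<sigma> * eigenbasis * eigenbasis_inv"
    by (rule assoc_mult_mat[of _ n n _ n _ n, symmetric]) simp_all
  also have "\<dots> = eigenbasis * diagonal_mat n eigensign * eigenbasis_inv"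
    by (simp only: perm_mat_mult_eigenbasis)
  finally have "(perm_mat n \<sigma> :: 'a mat) = eigenbasis * diagonal_mat n eigensign * eigenbasis_inv" .
  moreover have "{perm_mat n \<sigma>, diagonal_mat n eigensign, eigenbasis, eigenbasis_inv} \<subseteq> (carrier_mat n n :: 'a mat set)"
    by simp
  ultimately show ?thesis
    using similar_matI right left by blast
qed

lemma dim_eigenspaces_perm_mat:
  assumes two: "(2 :: 'a::field) \<noteq> 0"
  shows "dim_gen_eigenspace (perm_mat n \<sigma> :: 'a mat) 1 1 = n - card {i. i < n \<and> \<sigma> i < i}"
    and "dim_gen_eigenspace (perm_mat n \<sigma> :: 'a mat) (-1) 1 = card {i. i < n \<and> \<sigma> i < i}"
proof -
  have "(-1 :: 'a) \<noteq> 1"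
  proof
    assume "(-1 :: 'a) = 1"
    then have "(2 :: 'a) = 1 + -1"
      by simp
    then show False
      using two by simp
  qed
  then have "{i. i < n \<and> eigensign i = (1 :: 'a)} = {..<n} - {i. i < n \<and> \<sigma> i < i}"
    and "{i. i < n \<and> eigensign i = (-1 :: 'a)} = {i. i < n \<and> \<sigma> i < i}"
    by (auto simp: eigensign_def)
  then show "dim_gen_eigenspace (perm_mat n \<sigma> :: 'a mat) 1 1 = n - card {i. i < n \<and> \<sigma> i < i}"
    and "dim_gen_eigenspace (perm_mat n \<sigma> :: 'a mat) (-1) 1 = card {i. i < n \<and> \<sigma> i < i}"
    by (simp_all add: dim_gen_eigenspace_similar[OF similar_perm_mat_diagonal[OF two]]
        dim_gen_eigenspace_diagonal_mat card_Diff_subset subset_iff)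
qed

end

lemma two_neq_zero_mod_ring:
  assumes "CARD('p::prime_card) \<noteq> 2"
  shows "(2 :: 'p mod_ring) \<noteq> 0"
proof
  assume "(2 :: 'p mod_ring) = 0"
  then have "CARD('p) dvd 2"
    using of_nat_0_mod_ring_dvd[of 2] by simp
  then have "CARD('p) \<le> 2"
    by (rule dvd_imp_le) simp
  moreover have "CARD('p) > 1"
    using prime_card[where 'a = 'p] by (rule prime_gt_1_nat)
  ultimately show False
    using assms by linarith
qed

theorem corollary2p12:
  fixes n :: nat and E :: "nat \<Rightarrow> nat \<Rightarrow> bool" and P :: "int mat"
  assumes graph: "oriented_graph n E"
    and detW: "det (walk_matrix n (skew_adj n E)) \<noteq> 0"
    and perm: "permutation_matrix n P"
    and PSP: "transpose_mat P * skew_adj n E * P = transpose_mat (skew_adj n E)"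
    and odd_p: "CARD('p::prime_card) \<noteq> 2"
  shows "let Pp = map_mat (of_int :: int \<Rightarrow> 'p mod_ring) P in
         (if even n
          then dim_gen_eigenspace Pp 1 1 = n div 2 \<and> dim_gen_eigenspace Pp (-1) 1 = n div 2
          else dim_gen_eigenspace Pp 1 1 = (n + 1) div 2 \<and> dim_gen_eigenspace Pp (-1) 1 = (n - 1) div 2)"
proof -
  obtain \<sigma> where \<sigma>: "\<sigma> permutes {..<n}" and P: "P = perm_mat n \<sigma>"
    using perm unfolding permutation_matrix_def perm_mat_def by blast
  note involution = walk_nonsingular_perm_involution[OF graph detW \<sigma> PSP[unfolded P]]
  interpret perm_involution n \<sigma>
    using \<sigma> perm_mat_square_one_imp_involution[OF \<sigma> involution(1)] by unfold_locales
  have "card {i. i < n \<and> \<sigma> i < i} = n div 2"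
    using card_decomposition involution(2) by presburger
  then show ?thesis
    using dim_eigenspaces_perm_mat[OF two_neq_zero_mod_ring[OF odd_p]]
    by (simp add: Let_def P of_int_perm_mat) presburger
qed

end
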